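(* For any $a\geq b>0$, the events $\{\tau_a<\widehat{\tau}_b\}$ and $\{a-b<Y_{\widehat{\tau}_b}\}$ coincide almost surely.
   Context: Let $X$ be a spectrally negative Lévy process with non-monotone paths. Let $\overline{X}_t=\sup_{s\leq t}X_s$, $\underline{X}_t=\inf_{s\leq t}X_s$, $Y_t=\overline{X}_t-X_t$, $\widehat{Y}_t=X_t-\underline{X}_t$, $\tau_a=\inf\{t\geq0:Y_t>a\}$, $\widehat{\tau}_b=\inf\{t\geq0:\widehat{Y}_t>b\}$. *)

theory Defs
  imports "HOL-Probability.Probability"
begin

definition levy_process :: "'a measure \<Rightarrow> (real \<Rightarrow> 'a \<Rightarrow> real) \<Rightarrow> bool" where
  "levy_process M X \<longleftrightarrow>
     prob_space M \<and>
     (\<forall>t\<ge>0. X t \<in> borel_measurable M) \<and>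
     (\<forall>\<omega>\<in>space M. X 0 \<omega> = 0) \<and>
     \<comment> \<open>cadlag paths\<close>
     (\<forall>\<omega>\<in>space M. \<forall>t\<ge>0. continuous (at_right t) (\<lambda>s. X s \<omega>)
         \<and> (t > 0 \<longrightarrow> (\<exists>l. ((\<lambda>s. X s \<omega>) \<longlongrightarrow> l) (at_left t)))) \<and>
     \<comment> \<open>independent increments\<close>
     (\<forall>(n::nat) (t::nat \<Rightarrow> real). 0 \<le> t 0 \<and> (\<forall>i<n. t i < t (Suc i)) \<longrightarrow>
        prob_space.indep_vars M (\<lambda>_. borel) (\<lambda>i \<omega>. X (t (Suc i)) \<omega> - X (t i) \<omega>) {..<n}) \<and>
     \<comment> \<open>stationary increments\<close>
     (\<forall>s t. 0 \<le> s \<longrightarrow> 0 \<le> t \<longrightarrow>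
        distr M borel (\<lambda>\<omega>. X (t + s) \<omega> - X s \<omega>) = distr M borel (X t))"

definition spectrally_negative :: "'a measure \<Rightarrow> (real \<Rightarrow> 'a \<Rightarrow> real) \<Rightarrow> bool" where
  "spectrally_negative M X \<longleftrightarrow> levy_process M X \<and>
     (AE \<omega> in M. \<forall>t>0. X t \<omega> \<le> Lim (at_left t) (\<lambda>s. X s \<omega>))"

definition non_monotone_paths :: "'a measure \<Rightarrow> (real \<Rightarrow> 'a \<Rightarrow> real) \<Rightarrow> bool" where
  "non_monotone_paths M X \<longleftrightarrow>
     \<not> (AE \<omega> in M. mono_on {0..} (\<lambda>t. X t \<omega>)) \<and>
     \<not> (AE \<omega> in M. antimono_on {0..} (\<lambda>t. X t \<omega>))"

definition running_sup :: "(real \<Rightarrow> 'a \<Rightarrow> real) \<Rightarrow> real \<Rightarrow> 'a \<Rightarrow> real" where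
  "running_sup X t \<omega> = (SUP s\<in>{0..t}. X s \<omega>)"

definition running_inf :: "(real \<Rightarrow> 'a \<Rightarrow> real) \<Rightarrow> real \<Rightarrow> 'a \<Rightarrow> real" where
  "running_inf X t \<omega> = (INF s\<in>{0..t}. X s \<omega>)"

text \<open>Y = sup X - X (reflected at the supremum), Yhat = X - inf X.\<close>
definition refl_sup :: "(real \<Rightarrow> 'a \<Rightarrow> real) \<Rightarrow> real \<Rightarrow> 'a \<Rightarrow> real" where
  "refl_sup X t \<omega> = running_sup X t \<omega> - X t \<omega>"

definition refl_inf :: "(real \<Rightarrow> 'a \<Rightarrow> real) \<Rightarrow> real \<Rightarrow> 'a \<Rightarrow> real" where
  "refl_inf X t \<omega> = X t \<omega> - running_inf X t \<omega>"

text \<open>First passage times, valued in the extended reals (inf of empty set = \<infinity>).\<close>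
definition tau :: "(real \<Rightarrow> 'a \<Rightarrow> real) \<Rightarrow> real \<Rightarrow> 'a \<Rightarrow> ereal" where
  "tau X a \<omega> = (INF t\<in>{t. 0 \<le> t \<and> refl_sup X t \<omega> > a}. ereal t)"

definition tau_hat :: "(real \<Rightarrow> 'a \<Rightarrow> real) \<Rightarrow> real \<Rightarrow> 'a \<Rightarrow> ereal" where
  "tau_hat X b \<omega> = (INF t\<in>{t. 0 \<le> t \<and> refl_inf X t \<omega> > b}. ereal t)"

end

theory Submission
  imports Defs
begin

text \<open>
  Fix a path and let \<open>T\<close> be the first time at which \<open>X\<close> exceeds its running infimum by more
  than \<open>b\<close>. Right continuity gives \<open>X T - inf X \<ge> b\<close>, and without positive jumps \<open>X\<close> cannot
  overshoot, so \<open>X T = inf X + b\<close> (infimum and supremum over \<open>[0, T]\<close>). Hence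
  \<open>Y T > a - b\<close> iff the range \<open>sup X - inf X\<close> exceeds \<open>a\<close>. Choose times where \<open>X\<close> nearly
  attains \<open>sup X\<close> and \<open>inf X\<close>: if the near-minimum comes after the near-maximum, \<open>Y\<close> exceeds \<open>a\<close>
  before \<open>T\<close>; the other order would contradict the minimality of \<open>T\<close>. Conversely \<open>Y\<close> exceeding
  \<open>a\<close> before \<open>T\<close> forces the range to exceed \<open>a\<close>.

  \<open>T\<close> is a.s. finite: if \<open>P(X h > b) = 0\<close> for all \<open>h > 0\<close>, adding independent increments shows
  \<open>P(X h > 0) = 0\<close> for all \<open>h > 0\<close>, so the paths would be a.s. nonincreasing. So some \<open>X h\<close>
  exceeds \<open>b\<close> with positive probability, and then a.s. one of the i.i.d. increments of \<open>X\<close>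
  over the grid \<open>h * \<nat>\<close> exceeds \<open>b\<close>.
\<close>

definition cadlag :: "(real \<Rightarrow> real) \<Rightarrow> bool" where
  "cadlag x \<longleftrightarrow> (\<forall>t\<ge>0. continuous (at_right t) x
         \<and> (t > 0 \<longrightarrow> (\<exists>l. (x \<longlongrightarrow> l) (at_left t))))"

lemma cadlag_eventually_bounded:
  assumes "cadlag x" "0 \<le> y"
  shows "\<exists>B. \<forall>\<^sub>F s in nhds y. 0 \<le> s \<longrightarrow> \<bar>x s\<bar> \<le> B"
proof -
  have "(x \<longlongrightarrow> x y) (at_right y)"
    using assms unfolding cadlag_def by (simp add: continuous_within)
  then have "\<forall>\<^sub>F s in at_right y. dist (x s) (x y) < 1"
    using tendstoD zero_less_one by blast
  then have right: "\<forall>\<^sub>F s in at_right y. \<bar>x s\<bar> \<le> \<bar>x y\<bar> + 1"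
    by (rule eventually_mono) (simp add: dist_real_def)
  obtain l where left: "\<forall>\<^sub>F s in at_left y. 0 \<le> s \<longrightarrow> \<bar>x s\<bar> \<le> \<bar>l\<bar> + 1"
  proof (cases "y = 0")
    case True
    then have "\<forall>\<^sub>F s in at_left y. s < 0"
      unfolding eventually_at_left_field by (auto intro: exI[of _ "-1"])
    then show ?thesis
      by (intro that[of 0]) (auto elim: eventually_mono)
  next
    case False
    with assms obtain l where "(x \<longlongrightarrow> l) (at_left y)"
      unfolding cadlag_def by force
    then have "\<forall>\<^sub>F s in at_left y. dist (x s) l < 1"
      using tendstoD zero_less_one by blast
    then show ?thesis
      by (intro that[of l]) (auto elim!: eventually_mono simp: dist_real_def)
  qed
  have "\<forall>\<^sub>F s in nhds y. 0 \<le> s \<longrightarrow> \<bar>x s\<bar> \<le> max (\<bar>x y\<bar> + 1) (\<bar>l\<bar> + 1)"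
    using left right unfolding eventually_nhds_conv_at eventually_at_split
    by (auto elim!: eventually_mono)
  then show ?thesis ..
qed

lemma cadlag_bounded:
  assumes "cadlag x"
  obtains B where "\<And>s. s \<in> {0..t} \<Longrightarrow> \<bar>x s\<bar> \<le> B"
proof -
  have "\<exists>U B. open U \<and> y \<in> U \<and> (\<forall>s\<in>U. 0 \<le> s \<longrightarrow> \<bar>x s\<bar> \<le> B)" if "y \<in> {0..t}" for y
    using cadlag_eventually_bounded[OF assms, of y] that unfolding eventually_nhds by auto
  then obtain U B where UB: "\<And>y. y \<in> {0..t} \<Longrightarrow>
      open (U y) \<and> y \<in> U y \<and> (\<forall>s\<in>U y. 0 \<le> s \<longrightarrow> \<bar>x s\<bar> \<le> B y)"
    by metis
  obtain C where C: "C \<subseteq> {0..t}" "finite C" "{0..t} \<subseteq> (\<Union>y\<in>C. U y)"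
    using compactE_image[of "{0..t}" "{0..t}" U] UB by blast
  show ?thesis
  proof (rule that)
    fix s assume s: "s \<in> {0..t}"
    with C obtain y where "y \<in> C" "s \<in> U y" by blast
    with C UB s have "\<bar>x s\<bar> \<le> B y" "B y \<le> Max (B ` C)" by auto
    then show "\<bar>x s\<bar> \<le> Max (B ` C)" by linarith
  qed
qed

lemma cadlag_bdd:
  assumes "cadlag x"
  shows "bdd_above (x ` {0..t})" "bdd_below (x ` {0..t})"
proof -
  obtain B where B: "\<And>s. s \<in> {0..t} \<Longrightarrow> \<bar>x s\<bar> \<le> B"
    using cadlag_bounded[OF assms, of t] by metis
  then have "x s \<le> B" "-B \<le> x s" if "s \<in> {0..t}" for s
    using B[OF that] by auto
  then show "bdd_above (x ` {0..t})" "bdd_below (x ` {0..t})"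
    by (auto intro!: bdd_aboveI[of _ B] bdd_belowI[of _ "-B"])
qed

lemma refl_inf_0 [simp]: "refl_inf X 0 \<omega> = 0"
  by (simp add: refl_inf_def running_inf_def)

lemma tau_hat_nonneg: "0 \<le> tau_hat X b \<omega>"
  unfolding tau_hat_def by (auto intro!: INF_greatest)

locale cadlag_path =
  fixes X :: "real \<Rightarrow> 'a \<Rightarrow> real" and \<omega> :: 'a
  assumes cadlag_path: "cadlag (\<lambda>s. X s \<omega>)"
begin

lemma running_sup_ge: "0 \<le> s \<Longrightarrow> s \<le> t \<Longrightarrow> X s \<omega> \<le> running_sup X t \<omega>"
  unfolding running_sup_def using cadlag_bdd[OF cadlag_path] by (auto intro!: cSUP_upper)

lemma running_inf_le: "0 \<le> s \<Longrightarrow> s \<le> t \<Longrightarrow> running_inf X t \<omega> \<le> X s \<omega>"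
  unfolding running_inf_def using cadlag_bdd[OF cadlag_path] by (auto intro!: cINF_lower)

lemma running_sup_mono: "0 \<le> s \<Longrightarrow> s \<le> t \<Longrightarrow> running_sup X s \<omega> \<le> running_sup X t \<omega>"
  unfolding running_sup_def using cadlag_bdd[OF cadlag_path] by (auto intro!: cSUP_subset_mono)

lemma running_inf_greatest:
  "0 \<le> t \<Longrightarrow> (\<And>s. 0 \<le> s \<Longrightarrow> s \<le> t \<Longrightarrow> c \<le> X s \<omega>) \<Longrightarrow> c \<le> running_inf X t \<omega>"
  unfolding running_inf_def by (auto intro!: cINF_greatest)

lemma running_sup_approx:
  assumes "0 \<le> t" "0 < e"
  obtains u where "0 \<le> u" "u \<le> t" "running_sup X t \<omega> - e < X u \<omega>"
  using less_cSUP_iff[of "{0..t}" "\<lambda>s. X s \<omega>" "running_sup X t \<omega> - e"]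
    cadlag_bdd[OF cadlag_path] assms that by (auto simp: running_sup_def)

lemma running_inf_approx:
  assumes "0 \<le> t" "0 < e"
  obtains v where "0 \<le> v" "v \<le> t" "X v \<omega> < running_inf X t \<omega> + e"
  using cINF_less_iff[of "{0..t}" "\<lambda>s. X s \<omega>" "running_inf X t \<omega> + e"]
    cadlag_bdd[OF cadlag_path] assms that by (auto simp: running_inf_def)

lemma tau_hat_finite_if_increment_gt:
  assumes "0 \<le> s" "s \<le> t" "b < X t \<omega> - X s \<omega>"
  shows "tau_hat X b \<omega> < \<infinity>"
proof -
  have "b < refl_inf X t \<omega>"
    using running_inf_le[of s t] assms by (simp add: refl_inf_def)
  then have "tau_hat X b \<omega> \<le> ereal t"
    using assms unfolding tau_hat_def by (intro INF_lower) simp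
  then show ?thesis
    using le_less_trans by fastforce
qed

end

locale first_passage = cadlag_path +
  fixes b :: real
  assumes b_pos: "0 < b"
    and passage_finite: "tau_hat X b \<omega> < \<infinity>"
begin

definition passage_time :: real where
  "passage_time = real_of_ereal (tau_hat X b \<omega>)"

lemma tau_hat_eq: "tau_hat X b \<omega> = ereal passage_time"
  using tau_hat_nonneg[of X b \<omega>] passage_finite unfolding passage_time_def
  by (cases "tau_hat X b \<omega>") auto

lemma passage_time_nonneg: "0 \<le> passage_time"
  using tau_hat_nonneg[of X b \<omega>] by (simp add: tau_hat_eq)

lemma passage_time_le: "0 \<le> t \<Longrightarrow> b < refl_inf X t \<omega> \<Longrightarrow> passage_time \<le> t"
  using INF_lower[of t "{t. 0 \<le> t \<and> b < refl_inf X t \<omega>}" ereal]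
  by (simp add: tau_hat_eq[unfolded tau_hat_def])

lemma refl_inf_before_passage_time: "0 \<le> s \<Longrightarrow> s < passage_time \<Longrightarrow> refl_inf X s \<omega> \<le> b"
  using passage_time_le by force

lemma passage_time_approx:
  assumes "passage_time < c"
  obtains t where "passage_time \<le> t" "t < c" "b < refl_inf X t \<omega>"
proof -
  have "(INF t\<in>{t. 0 \<le> t \<and> b < refl_inf X t \<omega>}. ereal t) < ereal c"
    using assms tau_hat_eq by (simp add: tau_hat_def)
  then show ?thesis
    using that passage_time_le by (auto simp: INF_less_iff)
qed

lemma refl_inf_passage_time_ge: "b \<le> refl_inf X passage_time \<omega>"
proof (rule ccontr)
  define T where "T = passage_time"
  assume "\<not> b \<le> refl_inf X passage_time \<omega>"
  then have below: "refl_inf X T \<omega> < b"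
    by (simp add: T_def)
  then have eps: "0 < (b - refl_inf X T \<omega>) / 3" (is "0 < ?eps")
    by simp
  have T: "0 \<le> T" by (simp add: T_def passage_time_nonneg)
  have "((\<lambda>s. X s \<omega>) \<longlongrightarrow> X T \<omega>) (at_right T)"
    using cadlag_path T unfolding cadlag_def by (simp add: continuous_within)
  then have "\<forall>\<^sub>F s in at_right T. dist (X s \<omega>) (X T \<omega>) < ?eps"
    using tendstoD eps by blast
  then obtain c where c: "T < c" "\<And>s. T < s \<Longrightarrow> s < c \<Longrightarrow> \<bar>X s \<omega> - X T \<omega>\<bar> < ?eps"
    by (auto simp: eventually_at_right_field dist_real_def)
  obtain t where t: "T \<le> t" "t < c" "b < refl_inf X t \<omega>"
    using passage_time_approx c(1) unfolding T_def by blast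
  have near: "\<bar>X s \<omega> - X T \<omega>\<bar> < ?eps" if "T \<le> s" "s \<le> t" for s
    using c that t eps by (cases "s = T") auto
  have "running_inf X T \<omega> - ?eps \<le> running_inf X t \<omega>"
  proof (rule running_inf_greatest)
    fix s assume "0 \<le> s" "s \<le> t"
    show "running_inf X T \<omega> - ?eps \<le> X s \<omega>"
    proof (cases "s \<le> T")
      case True
      with \<open>0 \<le> s\<close> show ?thesis
        using running_inf_le[of s T] eps by linarith
    next
      case False
      with \<open>s \<le> t\<close> show ?thesis
        using running_inf_le[of T T] near[of s] T by linarith
    qed
  qed (use T t in simp)
  then have "refl_inf X t \<omega> < refl_inf X T \<omega> + 2 * ?eps"
    using near[of t] t unfolding refl_inf_def abs_less_iff by linarith
  then show False
    using t below by (simp add: field_simps)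
qed

lemma passage_time_pos: "0 < passage_time"
  using refl_inf_passage_time_ge passage_time_nonneg b_pos
  by (cases "passage_time = 0") auto

text \<open>Without positive jumps the path cannot overshoot level \<open>b\<close>: before the passage time
  it stays within \<open>b\<close> of every earlier value, and so does its left limit.\<close>
lemma refl_inf_passage_time_le:
  assumes no_jump: "X passage_time \<omega> \<le> Lim (at_left passage_time) (\<lambda>s. X s \<omega>)"
  shows "refl_inf X passage_time \<omega> \<le> b"
proof -
  define T where "T = passage_time"
  have T: "0 < T" by (simp add: T_def passage_time_pos)
  obtain l where l: "((\<lambda>s. X s \<omega>) \<longlongrightarrow> l) (at_left T)"
    using cadlag_path T unfolding cadlag_def by force
  have "X T \<omega> \<le> l"
    using no_jump l by (simp add: T_def tendsto_Lim)
  have "X T \<omega> - b \<le> running_inf X T \<omega>"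
  proof (rule running_inf_greatest)
    fix r assume r: "0 \<le> r" "r \<le> T"
    show "X T \<omega> - b \<le> X r \<omega>"
    proof (cases "r = T")
      case False
      have "X s \<omega> \<le> X r \<omega> + b" if "r < s" "s < T" for s
        using refl_inf_before_passage_time[of s] running_inf_le[of r s] r that
        by (simp add: T_def refl_inf_def)
      with r False have "\<forall>\<^sub>F s in at_left T. X s \<omega> \<le> X r \<omega> + b"
        unfolding eventually_at_left_field by (intro exI[of _ r]) auto
      then have "l \<le> X r \<omega> + b"
        using tendsto_upperbound[OF l] by simp
      with \<open>X T \<omega> \<le> l\<close> show ?thesis by simp
    qed (use b_pos in simp)
  qed (use T in simp)
  then show ?thesis
    by (simp add: T_def refl_inf_def)
qed

lemma tau_less_passage_time_imp:
  assumes at_level: "refl_inf X passage_time \<omega> = b"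
    and before: "tau X a \<omega> < ereal passage_time"
  shows "a - b < refl_sup X passage_time \<omega>"
proof -
  define T where "T = passage_time"
  obtain t where t: "0 \<le> t" "a < refl_sup X t \<omega>" "t < T"
    using before by (auto simp: tau_def INF_less_iff T_def)
  have "running_sup X t \<omega> \<le> running_sup X T \<omega>" "running_inf X T \<omega> \<le> X t \<omega>"
    using t running_sup_mono running_inf_le by auto
  with t at_level show ?thesis
    by (simp add: T_def refl_sup_def refl_inf_def)
qed

lemma tau_less_passage_time_if:
  assumes at_level: "refl_inf X passage_time \<omega> = b" and "b \<le> a"
    and gap: "a - b < refl_sup X passage_time \<omega>"
  shows "tau X a \<omega> < ereal passage_time"
proof -
  define T where "T = passage_time"
  define S where "S = running_sup X T \<omega>"
  define I where "I = running_inf X T \<omega>"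
  have XT: "X T \<omega> = I + b"
    using at_level by (simp add: T_def I_def refl_inf_def)
  have "a < S - I"
    using gap XT by (simp add: T_def S_def refl_sup_def)
  define d where "d = min ((S - I - a) / 3) (b / 2)"
  have d: "0 < d" "3 * d \<le> S - I - a" "2 * d \<le> b"
    using \<open>a < S - I\<close> b_pos unfolding d_def min_def by auto
  have T: "0 \<le> T"
    by (simp add: T_def passage_time_nonneg)
  obtain u where u: "0 \<le> u" "u \<le> T" "S - d < X u \<omega>"
    using running_sup_approx[OF T d(1)] S_def by blast
  obtain v where v: "0 \<le> v" "v \<le> T" "X v \<omega> < I + d"
    using running_inf_approx[OF T d(1)] I_def by blast
  have "u < v"
  proof (rule ccontr)
    assume "\<not> u < v"
    then have "running_inf X u \<omega> \<le> X v \<omega>"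
      using running_inf_le v by simp
    then have "b < refl_inf X u \<omega>"
      using u v d \<open>b \<le> a\<close> by (simp add: refl_inf_def)
    then have "u = T"
      using passage_time_le[OF u(1)] u(2) by (simp add: T_def)
    then show False
      using u XT d \<open>b \<le> a\<close> by simp
  qed
  have "X u \<omega> \<le> running_sup X v \<omega>"
    using running_sup_ge u \<open>u < v\<close> by simp
  then have "a < refl_sup X v \<omega>"
    using u v d by (simp add: refl_sup_def)
  then have "tau X a \<omega> \<le> ereal v"
    using v(1) by (auto simp: tau_def intro: INF_lower)
  also have "v < T"
    using v XT d by (cases "v = T") auto
  finally show ?thesis
    by (simp add: T_def)
qed

lemma tau_less_tau_hat_iff:
  assumes "b \<le> a"
    and no_jump: "X passage_time \<omega> \<le> Lim (at_left passage_time) (\<lambda>s. X s \<omega>)"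
  shows "tau X a \<omega> < tau_hat X b \<omega> \<longleftrightarrow> a - b < refl_sup X (real_of_ereal (tau_hat X b \<omega>)) \<omega>"
proof -
  have "refl_inf X passage_time \<omega> = b"
    using refl_inf_passage_time_ge refl_inf_passage_time_le[OF no_jump] by simp
  then show ?thesis
    using tau_less_passage_time_imp tau_less_passage_time_if[OF _ \<open>b \<le> a\<close>]
    by (auto simp: tau_hat_eq passage_time_def[symmetric])
qed

end

lemma right_continuous_le_if_rats:
  fixes x :: "real \<Rightarrow> real"
  assumes "continuous (at_right t) x" "0 < d"
    and "\<And>r. r \<in> \<rat> \<Longrightarrow> t < r \<Longrightarrow> r < t + d \<Longrightarrow> x r \<le> c"
  shows "x t \<le> c"
proof (rule ccontr)
  assume "\<not> x t \<le> c"
  moreover have "(x \<longlongrightarrow> x t) (at_right t)"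
    using assms(1) by (simp add: continuous_within)
  ultimately have "\<forall>\<^sub>F s in at_right t. c < x s"
    by (intro order_tendstoD(1)) auto
  then obtain e where e: "t < e" "\<And>s. t < s \<Longrightarrow> s < e \<Longrightarrow> c < x s"
    by (auto simp: eventually_at_right_field)
  obtain r where "r \<in> \<rat>" "t < r" "r < min e (t + d)"
    using Rats_dense_in_real[of t "min e (t + d)"] e assms(2) by auto
  with e assms(3)[of r] show False
    by force
qed

lemma right_continuous_ge_if_rats:
  fixes x :: "real \<Rightarrow> real"
  assumes "continuous (at_right t) x" "0 < d"
    and "\<And>r. r \<in> \<rat> \<Longrightarrow> t < r \<Longrightarrow> r < t + d \<Longrightarrow> c \<le> x r"
  shows "c \<le> x t"
  using right_continuous_le_if_rats[of t "\<lambda>s. - x s" d "- c"] assms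
  by (auto intro: continuous_minus)

lemma antimono_on_if_rats:
  fixes x :: "real \<Rightarrow> real"
  assumes rc: "\<And>t. 0 \<le> t \<Longrightarrow> continuous (at_right t) x"
    and rats: "\<And>q r. q \<in> \<rat> \<Longrightarrow> r \<in> \<rat> \<Longrightarrow> 0 \<le> q \<Longrightarrow> q < r \<Longrightarrow> x r \<le> x q"
  shows "antimono_on {0..} x"
proof (rule monotone_onI)
  have le_rat: "x t \<le> x q" if "q \<in> \<rat>" "0 \<le> q" "q < t" for q t
    using that by (intro right_continuous_le_if_rats[of t x 1] rc rats) auto
  fix s t :: real assume st: "s \<in> {0..}" "t \<in> {0..}" "s \<le> t"
  show "x t \<le> x s"
  proof (cases "s = t")
    case False
    with st show ?thesis
      by (intro right_continuous_ge_if_rats[of s x "t - s"] rc le_rat) auto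
  qed simp
qed

lemma (in finite_measure) measure_gt_neq_0_obtain_larger_level:
  fixes f :: "'a \<Rightarrow> real"
  assumes [measurable]: "f \<in> borel_measurable M"
    and pos: "measure M {x\<in>space M. c < f x} \<noteq> 0"
  obtains e where "c < e" "measure M {x\<in>space M. e < f x} \<noteq> 0"
proof -
  have "{x\<in>space M. c < f x} = (\<Union>n. {x\<in>space M. c + 1 / Suc n < f x})"
  proof safe
    fix x assume "x \<in> space M" "c < f x"
    then obtain n where "1 / Suc n < f x - c"
      by (metis diff_gt_0_iff_gt nat_approx_posE)
    with \<open>x \<in> space M\<close> show "x \<in> (\<Union>n. {x\<in>space M. c + 1 / Suc n < f x})"
      by (auto simp del: of_nat_Suc intro!: exI[of _ n])
  qed (auto intro: less_trans[rotated])
  with pos have "(\<Union>n. {x\<in>space M. c + 1 / Suc n < f x}) \<notin> null_sets M"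
    by (auto simp: measure_def)
  then obtain n where "{x\<in>space M. c + 1 / Suc n < f x} \<notin> null_sets M"
    by blast
  then show ?thesis
    by (intro that[of "c + 1 / Suc n"]) (auto simp: emeasure_eq_measure null_setsI)
qed

lemma levy_process_prob_space: "levy_process M X \<Longrightarrow> prob_space M"
  by (simp add: levy_process_def)

lemma levy_process_measurable: "levy_process M X \<Longrightarrow> 0 \<le> t \<Longrightarrow> X t \<in> borel_measurable M"
  by (simp add: levy_process_def)

lemma levy_process_cadlag: "levy_process M X \<Longrightarrow> \<omega> \<in> space M \<Longrightarrow> cadlag (\<lambda>s. X s \<omega>)"
  unfolding levy_process_def cadlag_def by blast

lemma levy_increment_measure:
  assumes L: "levy_process M X" and "0 \<le> s" "0 \<le> t" and C: "C \<in> sets borel"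
  shows "measure M {\<omega>\<in>space M. X (t + s) \<omega> - X s \<omega> \<in> C} = measure M {\<omega>\<in>space M. X t \<omega> \<in> C}"
proof -
  have "distr M borel (\<lambda>\<omega>. X (t + s) \<omega> - X s \<omega>) = distr M borel (X t)"
    using L assms unfolding levy_process_def by auto
  moreover have "(\<lambda>\<omega>. X (t + s) \<omega> - X s \<omega>) \<in> borel_measurable M" "X t \<in> borel_measurable M"
    using levy_process_measurable[OF L] assms by auto
  ultimately show ?thesis
    using measure_distr[OF _ C, of "\<lambda>\<omega>. X (t + s) \<omega> - X s \<omega>" M]
      measure_distr[OF _ C, of "X t" M]
    by (simp add: vimage_def Int_def conj_commute)
qed

lemma levy_grid_increments_measure:
  assumes L: "levy_process M X" and h: "0 < h" and C: "C \<in> sets borel"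
  shows "measure M {\<omega>\<in>space M. \<forall>k<n. X (real (Suc k) * h) \<omega> - X (real k * h) \<omega> \<in> C}
        = measure M {\<omega>\<in>space M. X h \<omega> \<in> C} ^ n"
proof -
  interpret prob_space M
    using L by (rule levy_process_prob_space)
  define Z where "Z = (\<lambda>k \<omega>. X (real (Suc k) * h) \<omega> - X (real k * h) \<omega>)"
  show ?thesis
  proof (cases "n = 0")
    case True
    then show ?thesis by (simp add: prob_space)
  next
    case False
    have "indep_vars (\<lambda>_. borel) Z {..<n}"
      using L h unfolding levy_process_def Z_def
      by (auto elim!: allE[of _ n] allE[of _ "\<lambda>i. real i * h"])
    then have "prob (\<Inter>k\<in>{..<n}. Z k -` C \<inter> space M) = (\<Prod>k<n. prob (Z k -` C \<inter> space M))"
      using False C by (intro indep_varsD) auto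
    moreover have "(\<Inter>k\<in>{..<n}. Z k -` C \<inter> space M) = {\<omega>\<in>space M. \<forall>k<n. Z k \<omega> \<in> C}"
      using False by auto
    moreover have "prob (Z k -` C \<inter> space M) = prob {\<omega>\<in>space M. X h \<omega> \<in> C}" for k
      using levy_increment_measure[OF L _ _ C, of "real k * h" h] h
      by (simp add: Z_def vimage_def Int_def conj_commute algebra_simps)
    ultimately show ?thesis
      by (simp add: Z_def)
  qed
qed

lemma levy_AE_exists_grid_increment_gt:
  assumes L: "levy_process M X" and h: "0 < h"
    and pos: "0 < measure M {\<omega>\<in>space M. b < X h \<omega>}"
  shows "AE \<omega> in M. \<exists>k. b < X (real (Suc k) * h) \<omega> - X (real k * h) \<omega>"
proof -
  interpret prob_space M
    using L by (rule levy_process_prob_space)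
  have [measurable]: "X (real k * h) \<in> borel_measurable M" "X h \<in> borel_measurable M" for k
    using levy_process_measurable[OF L] h by simp_all
  have [measurable]: "X (real (Suc k) * h) \<in> borel_measurable M" for k
    using levy_process_measurable[OF L] h by (simp del: of_nat_Suc)
  define N where "N = {\<omega>\<in>space M. \<forall>k. X (real (Suc k) * h) \<omega> - X (real k * h) \<omega> \<in> {..b}}"
  define q where "q = measure M {\<omega>\<in>space M. X h \<omega> \<in> {..b}}"
  have "{\<omega>\<in>space M. X h \<omega> \<in> {..b}} = space M - {\<omega>\<in>space M. b < X h \<omega>}"
    by auto
  then have q: "0 \<le> q" "q < 1"
    using pos by (simp_all add: q_def prob_compl)
  have "measure M N \<le> q ^ n" for n
  proof -
    have "measure M N
        \<le> measure M {\<omega>\<in>space M. \<forall>k<n. X (real (Suc k) * h) \<omega> - X (real k * h) \<omega> \<in> {..b}}"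
      by (rule finite_measure_mono) (auto simp: N_def simp del: of_nat_Suc)
    also have "\<dots> = q ^ n"
      unfolding q_def by (rule levy_grid_increments_measure[OF L h]) simp
    finally show ?thesis .
  qed
  moreover have "(\<lambda>n. q ^ n) \<longlonglongrightarrow> 0"
    using q by (intro LIMSEQ_power_zero) simp
  ultimately have "measure M N \<le> 0"
    by (intro tendsto_le[OF trivial_limit_sequentially _ tendsto_const]) auto
  moreover have "N \<in> sets M"
    unfolding N_def by measurable
  ultimately have "N \<in> null_sets M"
    using measure_nonneg[of M N] by (intro null_setsI) (simp add: emeasure_eq_measure)
  then show ?thesis
    by (rule AE_I') (auto simp: N_def simp del: of_nat_Suc intro: leI)
qed

text \<open>The grid increments are independent copies of \<open>X h\<close>; if all \<open>n\<close> of them exceed \<open>e\<close>,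
  their telescoping sum \<open>X (n * h)\<close> exceeds \<open>b\<close>.\<close>
lemma levy_measure_gt_power_le:
  assumes L: "levy_process M X" and h: "0 < h" and b: "b < real n * e"
  shows "measure M {\<omega>\<in>space M. e < X h \<omega>} ^ n \<le> measure M {\<omega>\<in>space M. b < X (real n * h) \<omega>}"
proof -
  interpret prob_space M
    using L by (rule levy_process_prob_space)
  have [measurable]: "X (real n * h) \<in> borel_measurable M"
    using levy_process_measurable[OF L] h by simp
  have "measure M {\<omega>\<in>space M. e < X h \<omega>} ^ n
      = measure M {\<omega>\<in>space M. \<forall>k<n. X (real (Suc k) * h) \<omega> - X (real k * h) \<omega> \<in> {e<..}}"
    using levy_grid_increments_measure[OF L h, of "{e<..}" n] by simp
  also have "\<dots> \<le> measure M {\<omega>\<in>space M. b < X (real n * h) \<omega>}"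
  proof (rule finite_measure_mono)
    show "{\<omega>\<in>space M. \<forall>k<n. X (real (Suc k) * h) \<omega> - X (real k * h) \<omega> \<in> {e<..}}
        \<subseteq> {\<omega>\<in>space M. b < X (real n * h) \<omega>}"
    proof safe
      fix \<omega> assume \<omega>: "\<omega> \<in> space M" "\<forall>k<n. X (real (Suc k) * h) \<omega> - X (real k * h) \<omega> \<in> {e<..}"
      have "real n * e = (\<Sum>k<n. e)"
        by simp
      also have "\<dots> \<le> (\<Sum>k<n. X (real (Suc k) * h) \<omega> - X (real k * h) \<omega>)"
        using \<omega>(2) by (intro sum_mono) (simp del: of_nat_Suc add: less_imp_le)
      also have "\<dots> = X (real n * h) \<omega>"
        using sum_lessThan_telescope[of "\<lambda>k. X (real k * h) \<omega>" n] L \<omega>(1)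
        by (simp add: levy_process_def)
      finally show "b < X (real n * h) \<omega>"
        using b by simp
    qed
  qed measurable
  finally show ?thesis .
qed

lemma levy_measure_pos_eq_0:
  assumes L: "levy_process M X" and b: "0 < b"
    and null: "\<And>h. 0 < h \<Longrightarrow> measure M {\<omega>\<in>space M. b < X h \<omega>} = 0"
    and h: "0 < h"
  shows "measure M {\<omega>\<in>space M. 0 < X h \<omega>} = 0"
proof (rule ccontr)
  interpret prob_space M
    using L by (rule levy_process_prob_space)
  assume pos: "measure M {\<omega>\<in>space M. 0 < X h \<omega>} \<noteq> 0"
  obtain e where e: "0 < e" "measure M {\<omega>\<in>space M. e < X h \<omega>} \<noteq> 0"
    using measure_gt_neq_0_obtain_larger_level[OF levy_process_measurable[OF L] pos] h by auto
  obtain n :: nat where n: "b < real n * e"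
    using ex_less_of_nat_mult[OF e(1)] by blast
  with b have "n \<noteq> 0"
    by (intro notI) simp
  with h have "0 < real n * h"
    by simp
  have "0 < measure M {\<omega>\<in>space M. e < X h \<omega>}"
    using e(2) measure_nonneg[of M "{\<omega>\<in>space M. e < X h \<omega>}"] by linarith
  then have "0 < measure M {\<omega>\<in>space M. e < X h \<omega>} ^ n"
    by (rule zero_less_power)
  also have "\<dots> \<le> measure M {\<omega>\<in>space M. b < X (real n * h) \<omega>}"
    by (rule levy_measure_gt_power_le[OF L h n])
  also have "\<dots> = 0"
    by (rule null) fact
  finally show False
    by simp
qed

lemma levy_AE_antimono_on:
  assumes L: "levy_process M X"
    and null: "\<And>h. 0 < h \<Longrightarrow> measure M {\<omega>\<in>space M. 0 < X h \<omega>} = 0"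
  shows "AE \<omega> in M. antimono_on {0..} (\<lambda>t. X t \<omega>)"
proof -
  interpret prob_space M
    using L by (rule levy_process_prob_space)
  have "AE \<omega> in M. X r \<omega> \<le> X q \<omega>" if "0 \<le> q" "q < r" for q r
  proof -
    have [measurable]: "X q \<in> borel_measurable M" "X r \<in> borel_measurable M"
      using levy_process_measurable[OF L] that by simp_all
    have "measure M {\<omega>\<in>space M. X q \<omega> < X r \<omega>} = 0"
      using levy_increment_measure[OF L, of q "r - q" "{0<..}"] null[of "r - q"] that by simp
    then have "{\<omega>\<in>space M. X q \<omega> < X r \<omega>} \<in> null_sets M"
      by (intro null_setsI) (simp add: emeasure_eq_measure, measurable)
    then show ?thesis
      by (rule AE_I') auto
  qed
  then have "AE \<omega> in M. \<forall>q\<in>\<rat>. \<forall>r\<in>\<rat>. 0 \<le> q \<longrightarrow> q < r \<longrightarrow> X r \<omega> \<le> X q \<omega>"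
    by (simp add: AE_ball_countable countable_rat)
  then show ?thesis
  proof (rule AE_mp[OF _ AE_I2], intro impI)
    fix \<omega> assume "\<omega> \<in> space M" "\<forall>q\<in>\<rat>. \<forall>r\<in>\<rat>. 0 \<le> q \<longrightarrow> q < r \<longrightarrow> X r \<omega> \<le> X q \<omega>"
    then show "antimono_on {0..} (\<lambda>t. X t \<omega>)"
      using levy_process_cadlag[OF L] by (intro antimono_on_if_rats) (auto simp: cadlag_def)
  qed
qed

lemma levy_exists_measure_gt_pos:
  assumes L: "levy_process M X" and "non_monotone_paths M X" and "0 < b"
  obtains h where "0 < h" "0 < measure M {\<omega>\<in>space M. b < X h \<omega>}"
proof (cases "\<exists>h>0. 0 < measure M {\<omega>\<in>space M. b < X h \<omega>}")
  case False
  have "measure M {\<omega>\<in>space M. b < X h \<omega>} = 0" if "0 < h" for h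
  proof -
    have "\<not> 0 < measure M {\<omega>\<in>space M. b < X h \<omega>}"
      using False that by blast
    then show ?thesis
      using measure_nonneg[of M "{\<omega>\<in>space M. b < X h \<omega>}"] by linarith
  qed
  then have "AE \<omega> in M. antimono_on {0..} (\<lambda>t. X t \<omega>)"
    using levy_measure_pos_eq_0[OF L \<open>0 < b\<close>] by (intro levy_AE_antimono_on[OF L]) blast
  with assms(2) show ?thesis
    unfolding non_monotone_paths_def by blast
qed blast

theorem lemma1:
  fixes M :: "'a measure" and X :: "real \<Rightarrow> 'a \<Rightarrow> real" and a b :: real
  assumes "spectrally_negative M X"
    and "non_monotone_paths M X"
    and "a \<ge> b" and "b > 0"
  shows "AE \<omega> in M. (tau X a \<omega> < tau_hat X b \<omega> \<longleftrightarrow>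
            tau_hat X b \<omega> < \<infinity> \<and> a - b < refl_sup X (real_of_ereal (tau_hat X b \<omega>)) \<omega>)"
proof -
  have L: "levy_process M X"
    and no_jumps: "AE \<omega> in M. \<forall>t>0. X t \<omega> \<le> Lim (at_left t) (\<lambda>s. X s \<omega>)"
    using assms(1) by (auto simp: spectrally_negative_def)
  obtain h where h: "0 < h" "0 < measure M {\<omega>\<in>space M. b < X h \<omega>}"
    using levy_exists_measure_gt_pos[OF L assms(2,4)] by blast
  show ?thesis
    using levy_AE_exists_grid_increment_gt[OF L h] no_jumps AE_space
  proof eventually_elim
    case (elim \<omega>)
    interpret cadlag_path X \<omega>
      using levy_process_cadlag[OF L elim(3)] by unfold_locales
    obtain k where "b < X (real (Suc k) * h) \<omega> - X (real k * h) \<omega>"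
      using elim(1) by blast
    then have finite: "tau_hat X b \<omega> < \<infinity>"
      using h(1) by (intro tau_hat_finite_if_increment_gt) (auto simp: mult_right_mono)
    interpret first_passage X \<omega> b
      using finite assms(4) by unfold_locales
    show ?case
      using tau_less_tau_hat_iff[OF assms(3)] elim(2) passage_time_pos finite by simp
  qed
qed

end
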